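(* Let $(x_k)_{k\ge0}$ be indeterminates, define $a_n=x_n$ if $n=2^k-1$ for some integer $k\ge0$ and $a_n=0$ otherwise, and let $D(n)=\det\left(a_{i+j+1}\right)_{i,j=0}^{n-1}$ with $D(0)=1$. For $k\ge1$ and $n\ge0$ let $\mu_k(n)$ be the degree of $D(n)$ in the variable $x_{2^k-1}$. Then for every $k\ge1$ and $0\le i\le 2^{k-1}-1$: $$\mu_k(i)=0,\quad \mu_k(2^{k-1}+i)=2i+1,\quad \mu_k(2^k+i)=2^k-2i-1,\quad \mu_k(2^k+2^{k-1}+i)=0,$$ and for $n\ge 2^{k+1}$, $\mu_k(n)=\mu_k(n\bmod 2^{k+1})$.
   Context: The paper writes $D(n)=(-1)^{\sum_i\binom{\mu_i(n)}{2}}\prod_{i\ge1}x_{2^i-1}^{\mu_i(n)}$, so $\mu_i(n)$ is the exponent of $x_{2^i-1}$ in $D(n)$. *)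

theory Defs
  imports "HOL-Library.Poly_Mapping" "Jordan_Normal_Form.Determinant"
begin

text \<open>Multivariate polynomials over the integers in the indeterminates x_0, x_1, ...:
  finitely supported maps from monomials (exponent vectors nat =>0 nat) to coefficients.\<close>
type_synonym mpoly = "(nat \<Rightarrow>\<^sub>0 nat) \<Rightarrow>\<^sub>0 int"

definition Var :: "nat \<Rightarrow> mpoly" where
  "Var n = Poly_Mapping.single (Poly_Mapping.single n 1) 1"

definition degree_in :: "nat \<Rightarrow> mpoly \<Rightarrow> nat" where
  "degree_in v p = Max (insert 0 ((\<lambda>m. Poly_Mapping.lookup m v) ` Poly_Mapping.keys p))"

definition a_seq :: "nat \<Rightarrow> mpoly" where
  "a_seq n = (if \<exists>k::nat. n = 2 ^ k - 1 then Var n else 0)"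

definition D :: "nat \<Rightarrow> mpoly" where
  "D n = (if n = 0 then 1 else det (mat n n (\<lambda>(i, j). a_seq (i + j + 1))))"

definition mu :: "nat \<Rightarrow> nat \<Rightarrow> nat" where
  "mu k n = degree_in (2 ^ k - 1) (D n)"

end

theory Submission
  imports Defs "HOL-Library.Discrete_Functions"
begin

text \<open>The entry in row i and column j of the Hankel matrix is nonzero only if i + j + 2 is a
  power of two. For n > 0 let P be the least power of two above n: every row i with
  P - n - 1 \<le> i < n is forced to use column P - 2 - i, and what remains is the same problem of
  size P - n - 1. So exactly one permutation contributes to the determinant, D(n) is a signed
  monomial, and mu_k(n) counts the rows i whose partner j has i + j + 2 = 2^k. Under the
  reduction n \<mapsto> P - n - 1 this count gains 2n + 1 - P when P = 2^k, and for n \<ge> 2^k the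
  reduction is a reflection modulo 2^(k+1), which produces the periodic tent-shaped profile.\<close>

definition is_pow2 :: "nat \<Rightarrow> bool" where
  "is_pow2 x \<longleftrightarrow> (\<exists>j. x = 2 ^ j)"

lemma is_pow2_eqI:
  assumes "is_pow2 x" "is_pow2 y" "y < 2 * x" "x < 2 * y"
  shows "x = y"
proof -
  obtain a b where a: "x = 2 ^ a" and b: "y = 2 ^ b"
    using assms(1,2) unfolding is_pow2_def by blast
  have "(2::nat) ^ b < 2 ^ Suc a" "(2::nat) ^ a < 2 ^ Suc b"
    using assms(3,4) a b by simp_all
  then have "b < Suc a" "a < Suc b"
    using power_less_imp_less_exp[of "2::nat" b "Suc a"] power_less_imp_less_exp[of "2::nat" a "Suc b"]
    by simp_all
  then show ?thesis using a b by simp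
qed

lemma is_pow2_less_imp_double_dvd:
  assumes "is_pow2 x" "is_pow2 y" "x < y"
  shows "2 * x dvd y"
proof -
  obtain a b where a: "x = 2 ^ a" and b: "y = 2 ^ b"
    using assms(1,2) unfolding is_pow2_def by blast
  then have "Suc a \<le> b" using assms(3) by simp
  then have "(2::nat) ^ Suc a dvd 2 ^ b" by (rule le_imp_power_dvd)
  then show ?thesis using a b by simp
qed

definition pow2_above :: "nat \<Rightarrow> nat" where
  "pow2_above n = 2 * 2 ^ floor_log n"

lemma pow2_above_gt: "n < pow2_above n"
  unfolding pow2_above_def by (rule floor_log_exp2_gt)

lemma pow2_above_le_double: "0 < n \<Longrightarrow> pow2_above n \<le> 2 * n"
  unfolding pow2_above_def using floor_log_exp2_le[of n] by simp

lemma is_pow2_pow2_above: "is_pow2 (pow2_above n)"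
  unfolding pow2_above_def is_pow2_def by (metis power_Suc)

definition reduced_size :: "nat \<Rightarrow> nat" where
  "reduced_size n = pow2_above n - n - 1"

lemma reduced_size_less: "0 < n \<Longrightarrow> reduced_size n < n"
  unfolding reduced_size_def using pow2_above_le_double[of n] by simp

section \<open>The unique pairing of rows and columns\<close>

function pow2_pairing :: "nat \<Rightarrow> nat \<Rightarrow> nat" where
  "pow2_pairing n i =
     (if n \<le> i then i
      else if reduced_size n \<le> i then pow2_above n - 2 - i
      else pow2_pairing (reduced_size n) i)"
  by auto
termination
  by (relation "measure fst") (auto intro: reduced_size_less)

declare pow2_pairing.simps [simp del]

lemma pow2_pairing_id: "n \<le> i \<Longrightarrow> pow2_pairing n i = i"
  by (simp add: pow2_pairing.simps)

lemma pow2_pairing_top: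
  "reduced_size n \<le> i \<Longrightarrow> i < n \<Longrightarrow> pow2_pairing n i = pow2_above n - 2 - i"
  by (simp add: pow2_pairing.simps)

lemma pow2_pairing_low:
  "i < reduced_size n \<Longrightarrow> i < n \<Longrightarrow> pow2_pairing n i = pow2_pairing (reduced_size n) i"
  by (simp add: pow2_pairing.simps)

lemma pow2_pairing_less: "i < n \<Longrightarrow> pow2_pairing n i < n"
proof (induction n arbitrary: i rule: less_induct)
  case (less n)
  show ?case
  proof (cases "reduced_size n \<le> i")
    case True
    then show ?thesis
      using less.prems by (simp add: pow2_pairing_top reduced_size_def)
  next
    case False
    have "reduced_size n < n" using less.prems by (simp add: reduced_size_less)
    moreover have "pow2_pairing (reduced_size n) i < reduced_size n"
      using less.IH[OF calculation] False by simp
    ultimately show ?thesis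
      using False less.prems by (simp add: pow2_pairing_low)
  qed
qed

lemma pow2_pairing_involution: "i < n \<Longrightarrow> pow2_pairing n (pow2_pairing n i) = i"
proof (induction n arbitrary: i rule: less_induct)
  case (less n)
  have P: "n < pow2_above n" by (rule pow2_above_gt)
  show ?case
  proof (cases "reduced_size n \<le> i")
    case True
    have "reduced_size n \<le> pow2_above n - 2 - i" "pow2_above n - 2 - i < n"
      using True less.prems P unfolding reduced_size_def by linarith+
    then show ?thesis
      using True less.prems P by (simp add: pow2_pairing_top)
  next
    case False
    have s: "reduced_size n < n" using less.prems by (simp add: reduced_size_less)
    have "pow2_pairing (reduced_size n) i < reduced_size n"
      using False by (simp add: pow2_pairing_less)
    then show ?thesis
      using False less s by (simp add: pow2_pairing_low)
  qed
qed

lemma is_pow2_pow2_pairing_sum: "i < n \<Longrightarrow> is_pow2 (i + pow2_pairing n i + 2)"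
proof (induction n arbitrary: i rule: less_induct)
  case (less n)
  show ?case
  proof (cases "reduced_size n \<le> i")
    case True
    have "i + pow2_pairing n i + 2 = pow2_above n"
      using True less.prems pow2_above_gt[of n] by (simp add: pow2_pairing_top)
    then show ?thesis by (simp add: is_pow2_pow2_above)
  next
    case False
    then show ?thesis
      using less reduced_size_less[of n] by (simp add: pow2_pairing_low)
  qed
qed

lemma pow2_pairing_permutes: "pow2_pairing n permutes {0..<n}"
proof (rule bij_imp_permutes)
  show "bij_betw (pow2_pairing n) {0..<n} {0..<n}"
    by (rule bij_betw_byWitness[where f' = "pow2_pairing n"])
      (auto simp: pow2_pairing_less pow2_pairing_involution)
qed (simp add: pow2_pairing_id)

lemma pow2_partner_upper_half:
  assumes "i < n" "j < n" "is_pow2 (i + j + 2)" "pow2_above n \<le> 2 * (i + 1)"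
  shows "j = pow2_above n - 2 - i"
proof -
  have "n < pow2_above n" "pow2_above n \<le> 2 * n"
    using pow2_above_gt pow2_above_le_double assms(1) by auto
  then have "i + j + 2 = pow2_above n"
    using assms by (intro is_pow2_eqI is_pow2_pow2_above) auto
  then show ?thesis by simp
qed

lemma pow2_matching_top:
  assumes onto: "p ` {0..<n} = {0..<n}"
    and pow2: "\<forall>i<n. is_pow2 (i + p i + 2)"
    and i: "reduced_size n \<le> i" "i < n"
  shows "p i = pow2_above n - 2 - i"
proof (cases "pow2_above n \<le> 2 * (i + 1)")
  case True
  have "p i < n" using onto i by force
  then show ?thesis using pow2_partner_upper_half[OF i(2)] True pow2 i by simp
next
  case False
  \<comment> \<open>then the row j = P - 2 - i lies in the upper half, and its partner must be i\<close>
  define j where "j = pow2_above n - 2 - i"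
  have P: "n < pow2_above n" using pow2_above_gt .
  have j: "j < n" "pow2_above n \<le> 2 * (j + 1)"
    using i False P unfolding j_def reduced_size_def by auto
  obtain i' where i': "i' < n" "p i' = j"
    using onto j(1) by (metis atLeastLessThan_iff imageE zero_le)
  have "is_pow2 (i' + j + 2)" using pow2 i' by auto
  then have "is_pow2 (j + i' + 2)" by (simp add: add.commute)
  then have "i' = pow2_above n - 2 - j" using pow2_partner_upper_half[OF j(1) i'(1)] j by simp
  also have "\<dots> = i" using False P i unfolding j_def by simp
  finally show ?thesis using i' j_def by simp
qed

lemma pow2_matching_low:
  assumes inj: "inj_on p {0..<n}" and onto: "p ` {0..<n} = {0..<n}"
    and pow2: "\<forall>i<n. is_pow2 (i + p i + 2)"
    and x: "x < reduced_size n" "x < n"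
  shows "p x < reduced_size n"
proof (rule ccontr)
  assume "\<not> p x < reduced_size n"
  have px: "p x < n" using onto x(2) by force
  define t where "t = pow2_above n - 2 - p x"
  have P: "n < pow2_above n" using pow2_above_gt .
  have t: "reduced_size n \<le> t" "t < n"
    using \<open>\<not> p x < reduced_size n\<close> px P unfolding t_def reduced_size_def by auto
  have "p t = pow2_above n - 2 - t" by (rule pow2_matching_top[OF onto pow2 t])
  also have "\<dots> = p x" using px P unfolding t_def by simp
  finally have "t = x" using inj t \<open>x < n\<close> by (auto simp: inj_on_def)
  then show False using t x by simp
qed

lemma pow2_matching_unique:
  assumes "inj_on p {0..<n}" "p ` {0..<n} = {0..<n}" "\<forall>i<n. is_pow2 (i + p i + 2)" "i < n"
  shows "p i = pow2_pairing n i"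
  using assms
proof (induction n arbitrary: i rule: less_induct)
  case (less n)
  show ?case
  proof (cases "reduced_size n \<le> i")
    case True
    then show ?thesis
      using pow2_matching_top[OF less.prems(2,3)] less.prems(4) by (simp add: pow2_pairing_top)
  next
    case False
    define s where "s = reduced_size n"
    have sn: "s < n" using less.prems(4) reduced_size_less s_def by simp
    have inj: "inj_on p {0..<s}" using less.prems(1) sn by (auto intro: inj_on_subset)
    have "p ` {0..<s} \<subseteq> {0..<s}"
      using pow2_matching_low[OF less.prems(1-3)] sn s_def by auto
    then have onto: "p ` {0..<s} = {0..<s}" using endo_inj_surj[OF _ _ inj] by simp
    have "p i = pow2_pairing s i"
      using less.IH[OF sn inj onto] less.prems(3) sn False s_def by simp
    then show ?thesis using False less.prems(4) s_def by (simp add: pow2_pairing_low)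
  qed
qed

lemma permutes_pow2_matching_eq:
  assumes p: "p permutes {0..<n}" and pow2: "\<forall>i<n. is_pow2 (i + p i + 2)"
  shows "p = pow2_pairing n"
proof
  fix x
  show "p x = pow2_pairing n x"
  proof (cases "x < n")
    case True
    have "inj_on p {0..<n}" "p ` {0..<n} = {0..<n}"
      using permutes_inj_on[OF p] permutes_image[OF p] by auto
    then show ?thesis using pow2_matching_unique pow2 True by blast
  next
    case False
    then show ?thesis using permutes_not_in[OF p] by (simp add: pow2_pairing_id)
  qed
qed

section \<open>Counting the pairs with a prescribed power of two\<close>

definition pow2_pair_count :: "nat \<Rightarrow> nat \<Rightarrow> nat" where
  "pow2_pair_count K n = card {i. i < n \<and> i + pow2_pairing n i + 2 = K}"

lemma pow2_pair_count_reduce: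
  assumes "0 < n"
  shows "pow2_pair_count K n =
    (if pow2_above n = K then 2 * n + 1 - pow2_above n else 0) + pow2_pair_count K (reduced_size n)"
proof -
  define s where "s = reduced_size n"
  have P: "n < pow2_above n" "pow2_above n \<le> 2 * n"
    using pow2_above_gt pow2_above_le_double assms by auto
  have sn: "s < n" using assms reduced_size_less s_def by simp
  have top: "i + pow2_pairing n i + 2 = pow2_above n" if "s \<le> i" "i < n" for i
    using that P by (simp add: pow2_pairing_top s_def)
  have "{i. i < n \<and> i + pow2_pairing n i + 2 = K} =
      {i. i < s \<and> i + pow2_pairing n i + 2 = K} \<union> {i. s \<le> i \<and> i < n \<and> i + pow2_pairing n i + 2 = K}"
    using sn by auto
  also have "{i. i < s \<and> i + pow2_pairing n i + 2 = K} = {i. i < s \<and> i + pow2_pairing s i + 2 = K}"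
    using sn by (auto simp: pow2_pairing_low s_def)
  also have "{i. s \<le> i \<and> i < n \<and> i + pow2_pairing n i + 2 = K} =
      (if pow2_above n = K then {s..<n} else {})"
    using top by auto
  finally have "{i. i < n \<and> i + pow2_pairing n i + 2 = K} =
      {i. i < s \<and> i + pow2_pairing s i + 2 = K} \<union> (if pow2_above n = K then {s..<n} else {})" .
  moreover have "n - s = 2 * n + 1 - pow2_above n" using P s_def reduced_size_def by simp
  moreover have "card ({i. i < s \<and> i + pow2_pairing s i + 2 = K} \<union> {s..<n}) =
      card {i. i < s \<and> i + pow2_pairing s i + 2 = K} + (n - s)"
    by (subst card_Un_disjoint) auto
  ultimately show ?thesis
    unfolding pow2_pair_count_def s_def[symmetric] by simp
qed

definition mu_profile :: "nat \<Rightarrow> nat \<Rightarrow> nat" where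
  "mu_profile H y =
     (if y < H then 0 else if y < 2 * H then 2 * y + 1 - 2 * H
      else if y < 3 * H then 6 * H - 1 - 2 * y else 0)"

lemma mu_profile_reflect: "y < 4 * H \<Longrightarrow> mu_profile H (4 * H - 1 - y) = mu_profile H y"
  unfolding mu_profile_def by auto

lemma mod_reflect:
  fixes m P n :: nat
  assumes "m dvd P" "n < P"
  shows "(P - n - 1) mod m = m - 1 - n mod m"
proof -
  obtain q where q: "P = m * q" using assms(1) by blast
  have m: "0 < m" using assms q by (cases m) auto
  define a r where "a = n div m" and "r = n mod m"
  have n: "n = m * a + r" and r: "r < m" using m unfolding a_def r_def by simp_all
  have "m * a < m * q" using assms(2) q n by linarith
  then have "a < q" by simp
  then have "m * q = m * (Suc a + (q - a - 1))" by simp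
  also have "\<dots> = m * a + m * (q - a - 1) + m" by (simp add: algebra_simps)
  finally have "m * q = m * a + m * (q - a - 1) + m" .
  then have "P - n - 1 = (m - 1 - r) + m * (q - a - 1)" using q n r by linarith
  then have "(P - n - 1) mod m = (m - 1 - r) mod m" by (simp only: mod_mult_self2)
  also have "\<dots> = m - 1 - r" using r by simp
  finally show ?thesis unfolding r_def .
qed

lemma pow2_pair_count_eq_mu_profile:
  assumes H: "is_pow2 H"
  shows "pow2_pair_count (2 * H) n = mu_profile H (n mod (4 * H))"
proof (induction n rule: less_induct)
  case (less n)
  have H1: "1 \<le> H" using H unfolding is_pow2_def by auto
  show ?case
  proof (cases "n = 0")
    case True
    then show ?thesis using H1 by (simp add: pow2_pair_count_def mu_profile_def)
  next
    case False
    define s where "s = reduced_size n"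
    have P: "n < pow2_above n" "pow2_above n \<le> 2 * n"
      using pow2_above_gt pow2_above_le_double False by auto
    have sn: "s < n" using False reduced_size_less s_def by simp
    have ih: "pow2_pair_count (2 * H) s = mu_profile H (s mod (4 * H))"
      using less.IH[OF sn] .
    have reduce: "pow2_pair_count (2 * H) n =
        (if pow2_above n = 2 * H then 2 * n + 1 - pow2_above n else 0) + pow2_pair_count (2 * H) s"
      using pow2_pair_count_reduce False s_def by simp
    have pow2_2H: "is_pow2 (2 * H)" using H unfolding is_pow2_def by (metis power_Suc)
    consider "n < H" | "H \<le> n" "n < 2 * H" | "2 * H \<le> n" by linarith
    then show ?thesis
    proof cases
      case 1
      then show ?thesis using reduce ih sn P by (simp add: mu_profile_def)
    next
      case 2
      have P2H: "pow2_above n = 2 * H"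
        using pow2_2H 2 P by (intro is_pow2_eqI is_pow2_pow2_above) auto
      then have "s < H" using 2 unfolding s_def reduced_size_def by simp
      then show ?thesis using reduce ih P2H 2 by (simp add: mu_profile_def)
    next
      case 3
      have "2 * (2 * H) dvd pow2_above n"
        using pow2_2H 3 P by (intro is_pow2_less_imp_double_dvd is_pow2_pow2_above) auto
      then have "s mod (4 * H) = 4 * H - 1 - n mod (4 * H)"
        using mod_reflect[of "4 * H"] P unfolding s_def reduced_size_def by simp
      then show ?thesis
        using reduce ih 3 P H1 mu_profile_reflect[of "n mod (4 * H)" H] by simp
    qed
  qed
qed

section \<open>The determinant is a signed monomial\<close>

lemma a_seq_eq: "a_seq m = (if is_pow2 (m + 1) then Var m else 0)"
proof -
  have "m = 2 ^ k - 1 \<longleftrightarrow> m + 1 = 2 ^ k" for k :: nat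
    using one_le_power[of "2::nat" k] by linarith
  then show ?thesis unfolding a_seq_def is_pow2_def by simp
qed

lemma prod_Var:
  "finite A \<Longrightarrow> (\<Prod>i\<in>A. Var (f i)) =
    Poly_Mapping.single (\<Sum>i\<in>A. Poly_Mapping.single (f i) 1) 1"
  by (induction A rule: finite_induct) (simp_all add: Var_def mult_single)

lemma det_eq_single_term:
  fixes A :: "'a :: comm_ring_1 mat"
  assumes A: "A \<in> carrier_mat n n" and p: "p permutes {0..<n}"
    and others: "\<And>q. q permutes {0..<n} \<Longrightarrow> q \<noteq> p \<Longrightarrow> \<exists>i<n. A $$ (i, q i) = 0"
  shows "det A = signof p * (\<Prod>i = 0..<n. A $$ (i, p i))"
proof -
  let ?S = "{q. q permutes {0..<n}}"
  let ?t = "\<lambda>q. signof q * (\<Prod>i = 0..<n. A $$ (i, q i))"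
  have "?t q = 0" if "q \<in> ?S - {p}" for q
  proof -
    have "q permutes {0..<n}" "q \<noteq> p" using that by auto
    then obtain i where "i < n" "A $$ (i, q i) = 0" using others by blast
    then have "(\<Prod>i = 0..<n. A $$ (i, q i)) = 0" by (intro prod_zero) auto
    then show ?thesis by simp
  qed
  then have "sum ?t (?S - {p}) = 0" by (intro sum.neutral) blast
  moreover have "sum ?t ?S = ?t p + sum ?t (?S - {p})"
    using p by (intro sum.remove) (simp_all add: finite_permutations)
  ultimately show ?thesis using det_def'[OF A] by simp
qed

lemma D_eq_signed_monomial:
  assumes "0 < n"
  shows "D n = Poly_Mapping.single (\<Sum>i = 0..<n. Poly_Mapping.single (i + pow2_pairing n i + 1) 1)
                 (sign (pow2_pairing n))"
proof -
  define A :: "mpoly mat" where "A = mat n n (\<lambda>(i, j). a_seq (i + j + 1))"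
  have A: "A \<in> carrier_mat n n" unfolding A_def by simp
  have zero: "\<exists>i<n. A $$ (i, q i) = 0"
    if "q permutes {0..<n}" "q \<noteq> pow2_pairing n" for q
  proof -
    have "\<not> (\<forall>i<n. is_pow2 (i + q i + 2))"
      using permutes_pow2_matching_eq[OF that(1)] that(2) by blast
    then obtain i where i: "i < n" "\<not> is_pow2 (i + q i + 2)" by blast
    have "q i < n" using permutes_in_image[OF that(1)] i by simp
    then show ?thesis using i by (auto simp: A_def a_seq_eq)
  qed
  have "(\<Prod>i = 0..<n. A $$ (i, pow2_pairing n i)) = (\<Prod>i = 0..<n. Var (i + pow2_pairing n i + 1))"
    using pow2_pairing_less is_pow2_pow2_pairing_sum by (intro prod.cong) (auto simp: A_def a_seq_eq)
  then have "D n = signof (pow2_pairing n) * (\<Prod>i = 0..<n. Var (i + pow2_pairing n i + 1))"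
    using det_eq_single_term[OF A pow2_pairing_permutes zero] assms by (simp add: D_def A_def)
  also have "\<dots> = Poly_Mapping.single 0 (of_int (sign (pow2_pairing n))) *
      Poly_Mapping.single (\<Sum>i = 0..<n. Poly_Mapping.single (i + pow2_pairing n i + 1) 1) 1"
    by (simp only: prod_Var finite_atLeastLessThan single_of_int)
  finally show ?thesis by (simp add: mult_single)
qed

lemma degree_in_single: "c \<noteq> 0 \<Longrightarrow> degree_in v (Poly_Mapping.single m c) = Poly_Mapping.lookup m v"
  by (simp add: degree_in_def)

lemma mu_eq_pow2_pair_count: "mu k n = pow2_pair_count (2 ^ k) n"
proof (cases "n = 0")
  case True
  then show ?thesis by (simp add: mu_def D_def degree_in_def pow2_pair_count_def)
next
  case False
  have "mu k n = (\<Sum>i = 0..<n. Poly_Mapping.lookup (Poly_Mapping.single (i + pow2_pairing n i + 1) 1) (2 ^ k - 1))"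
    using False by (simp add: mu_def D_eq_signed_monomial degree_in_single sign_def lookup_sum)
  also have "\<dots> = card ({0..<n} \<inter> {i. i + pow2_pairing n i + 1 = 2 ^ k - 1})"
    by (simp add: lookup_single when_def sum.If_cases)
  also have "{0..<n} \<inter> {i. i + pow2_pairing n i + 1 = 2 ^ k - 1} =
      {i. i < n \<and> i + pow2_pairing n i + 2 = 2 ^ k}"
    using one_le_power[of "2::nat" k] by auto
  finally show ?thesis unfolding pow2_pair_count_def .
qed

theorem theorem5p5:
  fixes k :: nat
  assumes "k \<ge> 1"
  shows "(\<forall>i::nat. i \<le> 2 ^ (k - 1) - 1 \<longrightarrow>
            mu k i = 0 \<and>
            mu k (2 ^ (k - 1) + i) = 2 * i + 1 \<and>
            mu k (2 ^ k + i) = 2 ^ k - 2 * i - 1 \<and>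
            mu k (2 ^ k + 2 ^ (k - 1) + i) = 0)
       \<and> (\<forall>n::nat. n \<ge> 2 ^ (k + 1) \<longrightarrow> mu k n = mu k (n mod 2 ^ (k + 1)))"
proof -
  define H :: nat where "H = 2 ^ (k - 1)"
  have two_k: "(2::nat) ^ k = 2 * H"
    using assms by (simp add: H_def flip: power_Suc)
  then have two_Suc_k: "(2::nat) ^ (k + 1) = 4 * H" by simp
  have mu_eq: "mu k n = mu_profile H (n mod (4 * H))" for n
    using pow2_pair_count_eq_mu_profile[of H n]
    by (simp add: mu_eq_pow2_pair_count two_k H_def is_pow2_def)
  have "1 \<le> H" by (simp add: H_def)
  then show ?thesis
    unfolding two_k two_Suc_k H_def[symmetric] by (auto simp: mu_eq mu_profile_def)
qed

end
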